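(* Let $k$ be a field and $n\in\mathbb{Z}$. Let $(x,y)\in k^2$. Then $f_n(x,y)=0$ and $x^2-y-2=0$ hold simultaneously if and only if $n\neq0$ in $k$, $y=2-\frac1n$ and $x^2=4-\frac1n$; that is, the common zeros are the points $(\pm\sqrt{4-\frac1n},\,2-\frac1n)$ (when such square roots exist in $k$), and there are none if $n=0$ in $k$.
   Context: $\mathcal{S}_n(z)\in\mathbb{Z}[z]$ ($n\in\mathbb{Z}$) are the Chebyshev polynomials of the second kind defined by $\mathcal{S}_0=0$, $\mathcal{S}_1=1$, $\mathcal{S}_{n+1}=z\mathcal{S}_n-\mathcal{S}_{n-1}$ for all $n\in\mathbb{Z}$ (so that $\mathcal{S}_n(2\cos\theta)=\sin n\theta/\sin\theta$). Put $z=z(x,y)=2x^2-x^2y+y^2-2$ and $f_n(x,y)=(y-1)\mathcal{S}_n(z)-\mathcal{S}_{n-1}(z)$. *)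

theory Defs
  imports Main
begin

fun cheb_S_nat :: "nat \<Rightarrow> 'a::comm_ring_1 \<Rightarrow> 'a" where
  "cheb_S_nat 0 z = 0"
| "cheb_S_nat (Suc 0) z = 1"
| "cheb_S_nat (Suc (Suc n)) z = z * cheb_S_nat (Suc n) z - cheb_S_nat n z"

text \<open>Extension to all integer indices; the recurrence forces S (-n) = - S n.\<close>
definition cheb_S :: "int \<Rightarrow> 'a::comm_ring_1 \<Rightarrow> 'a" where
  "cheb_S n z = (if 0 \<le> n then cheb_S_nat (nat n) z else - cheb_S_nat (nat (- n)) z)"

definition zz :: "'a::comm_ring_1 \<Rightarrow> 'a \<Rightarrow> 'a" where
  "zz x y = 2 * x^2 - x^2 * y + y^2 - 2"

definition f :: "int \<Rightarrow> 'a::comm_ring_1 \<Rightarrow> 'a \<Rightarrow> 'a" where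
  "f n x y = (y - 1) * cheb_S n (zz x y) - cheb_S (n - 1) (zz x y)"

end

theory Submission
  imports Defs
begin

text \<open>On the parabola \<open>x\<^sup>2 = y + 2\<close> the argument \<open>z(x, y)\<close> of the Chebyshev polynomials is
  identically \<open>2\<close>, and \<open>S\<^sub>n(2) = n\<close>. So on the parabola \<open>f\<^sub>n\<close> collapses to the affine
  function \<open>n (y - 2) + 1\<close> of \<open>y\<close>, whose zero is \<open>y = 2 - 1/n\<close> when \<open>n \<noteq> 0\<close> in \<open>k\<close>
  and which has no zero when \<open>n = 0\<close> in \<open>k\<close>.\<close>

lemma cheb_S_nat_two: "cheb_S_nat n (2::'a::comm_ring_1) = of_nat n"
  by (induction n "2::'a" rule: cheb_S_nat.induct) (simp_all add: algebra_simps)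

lemma cheb_S_two: "cheb_S n (2::'a::comm_ring_1) = of_int n"
  by (simp add: cheb_S_def cheb_S_nat_two)

lemma zz_on_parabola:
  fixes x y :: "'a::comm_ring_1"
  assumes "x^2 = y + 2"
  shows "zz x y = 2"
  unfolding zz_def assms by (simp add: algebra_simps power2_eq_square)

lemma f_on_parabola:
  fixes x y :: "'a::comm_ring_1"
  assumes "x^2 = y + 2"
  shows "f n x y = of_int n * (y - 2) + 1"
  unfolding f_def zz_on_parabola[OF assms] cheb_S_two by (simp add: algebra_simps)

lemma affine_eq_zero_iff:
  fixes c y :: "'a::field"
  shows "c * (y - 2) + 1 = 0 \<longleftrightarrow> c \<noteq> 0 \<and> y = 2 - 1 / c"
  by (cases "c = 0") (auto simp: field_simps)

theorem proposition9p1: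
  fixes n :: int and x y :: "'k::field"
  shows "(f n x y = 0 \<and> x^2 - y - 2 = 0) \<longleftrightarrow>
         (of_int n \<noteq> (0::'k) \<and> y = 2 - 1 / of_int n \<and> x^2 = 4 - 1 / of_int n)"
proof -
  have "(f n x y = 0 \<and> x^2 - y - 2 = 0) \<longleftrightarrow>
        (of_int n * (y - 2) + 1 = 0 \<and> x^2 = y + 2)"
    using f_on_parabola[of x y n] by (auto simp: algebra_simps)
  also have "\<dots> \<longleftrightarrow> (of_int n \<noteq> (0::'k) \<and> y = 2 - 1 / of_int n \<and> x^2 = y + 2)"
    by (simp add: affine_eq_zero_iff)
  also have "\<dots> \<longleftrightarrow> (of_int n \<noteq> (0::'k) \<and> y = 2 - 1 / of_int n \<and> x^2 = 4 - 1 / of_int n)"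
    by auto
  finally show ?thesis .
qed

end
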